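(* Let $C$ be a parity complex. For all $M,P\subseteq C$ and $x\in C$, if $x^+$ moves $M$ to $P$ and $M$ is receptive, then $x^-$ moves $M$ to $P$.
   Context: A parity complex consists of a set $C=\bigsqcup_{n\ge 0}C_n$ graded by dimension, together with, for each $n\ge 0$ and each $x\in C_{n+1}$, two disjoint, non-empty, finite subsets $x^-,x^+\subseteq C_n$ (for $x\in C_0$ put $x^-=x^+=\emptyset$), subject to Axioms 1, 2, 3A, 3B below. Notation: for $S\subseteq C$, $S^-=\bigcup_{w\in S}w^-$, $S^+=\bigcup_{w\in S}w^+$, $S^\mp=S^-\setminus S^+$, $S^\pm=S^+\setminus S^-$; $x^{-+}=(x^-)^+$, etc. For $S,T\subseteq C$ write $S\perp T$ when $S^-\cap T^-=\emptyset$ and $S^+\cap T^+=\emptyset$; $x\perp y$ means $\{x\}\perp\{y\}$. With $S_n=S\cap C_n$, a set $S$ is well-formed when $S_0$ has at most one element and for every $n>0$ and all distinct $x,y\in S_n$, $x\perp y$. Write $x<y$ when $x^+\cap y^-\neq\emptyset$, and let $\lhd$ be the reflexive transitive closure of $<$. Axioms: (1) for all $x$, $x^{++}\cup x^{--}=x^{-+}\cup x^{+-}$; (2) for all $x$, $x^-$ and $x^+$ are well-formed; (3A) $x\lhd y$ and $y\lhd x$ imply $x=y$; (3B) if $x\lhd y$ then there is no $z$ with $x\in z^+$ and $y\in z^-$, and no $z$ with $y\in z^+$ and $x\in z^-$. For $S,M,P\subseteq C$, $S$ moves $M$ to $P$ when $M=(P\cup S^-)\setminus S^+$ and $P=(M\cup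 S^+)\setminus S^-$. A set $S\subseteq C$ is receptive when for all $x\in C$: if $x^{-+}\cap x^{++}\subseteq S$ and $S\cap x^{--}=\emptyset$ then $S\cap x^{+-}=\emptyset$; and if $x^{+-}\cap x^{--}\subseteq S$ and $S\cap x^{++}=\emptyset$ then $S\cap x^{-+}=\emptyset$. *)

theory Defs
  imports Main
begin

definition setm :: "('a \<Rightarrow> 'a set) \<Rightarrow> 'a set \<Rightarrow> 'a set" where
  "setm f S = \<Union> (f ` S)"

definition orth :: "('a \<Rightarrow> 'a set) \<Rightarrow> ('a \<Rightarrow> 'a set) \<Rightarrow> 'a set \<Rightarrow> 'a set \<Rightarrow> bool" where
  "orth mns pls S T \<longleftrightarrow> setm mns S \<inter> setm mns T = {} \<and> setm pls S \<inter> setm pls T = {}"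

definition well_formed ::
  "('a \<Rightarrow> nat) \<Rightarrow> ('a \<Rightarrow> 'a set) \<Rightarrow> ('a \<Rightarrow> 'a set) \<Rightarrow> 'a set \<Rightarrow> bool" where
  "well_formed dim mns pls S \<longleftrightarrow>
     (\<forall>x\<in>S. \<forall>y\<in>S. dim x = 0 \<longrightarrow> dim y = 0 \<longrightarrow> x = y) \<and>
     (\<forall>x\<in>S. \<forall>y\<in>S. dim x = dim y \<longrightarrow> dim x > 0 \<longrightarrow> x \<noteq> y \<longrightarrow> orth mns pls {x} {y})"

definition prec_rel :: "'a set \<Rightarrow> ('a \<Rightarrow> 'a set) \<Rightarrow> ('a \<Rightarrow> 'a set) \<Rightarrow> ('a \<times> 'a) set" where
  "prec_rel C mns pls = {(x, y). x \<in> C \<and> y \<in> C \<and> pls x \<inter> mns y \<noteq> {}}"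

definition parity_complex ::
  "'a set \<Rightarrow> ('a \<Rightarrow> nat) \<Rightarrow> ('a \<Rightarrow> 'a set) \<Rightarrow> ('a \<Rightarrow> 'a set) \<Rightarrow> bool" where
  "parity_complex C dim mns pls \<longleftrightarrow>
     (\<forall>x\<in>C. dim x = 0 \<longrightarrow> mns x = {} \<and> pls x = {}) \<and>
     (\<forall>x\<in>C. \<forall>n. dim x = Suc n \<longrightarrow>
         mns x \<subseteq> {y\<in>C. dim y = n} \<and> pls x \<subseteq> {y\<in>C. dim y = n} \<and>
         mns x \<inter> pls x = {} \<and> mns x \<noteq> {} \<and> pls x \<noteq> {} \<and>
         finite (mns x) \<and> finite (pls x)) \<and>
     \<comment> \<open>Axiom 1\<close>
     (\<forall>x\<in>C. setm pls (pls x) \<union> setm mns (mns x) = setm pls (mns x) \<union> setm mns (pls x)) \<and>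
     \<comment> \<open>Axiom 2\<close>
     (\<forall>x\<in>C. well_formed dim mns pls (mns x) \<and> well_formed dim mns pls (pls x)) \<and>
     \<comment> \<open>Axiom 3A\<close>
     (\<forall>x\<in>C. \<forall>y\<in>C. (x, y) \<in> (prec_rel C mns pls)\<^sup>* \<longrightarrow> (y, x) \<in> (prec_rel C mns pls)\<^sup>* \<longrightarrow> x = y) \<and>
     \<comment> \<open>Axiom 3B\<close>
     (\<forall>x\<in>C. \<forall>y\<in>C. (x, y) \<in> (prec_rel C mns pls)\<^sup>* \<longrightarrow>
         \<not> (\<exists>z\<in>C. x \<in> pls z \<and> y \<in> mns z) \<and> \<not> (\<exists>z\<in>C. y \<in> pls z \<and> x \<in> mns z))"

definition moves :: "('a \<Rightarrow> 'a set) \<Rightarrow> ('a \<Rightarrow> 'a set) \<Rightarrow> 'a set \<Rightarrow> 'a set \<Rightarrow> 'a set \<Rightarrow> bool" where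
  "moves mns pls S M P \<longleftrightarrow>
     M = (P \<union> setm mns S) - setm pls S \<and> P = (M \<union> setm pls S) - setm mns S"

definition receptive :: "'a set \<Rightarrow> ('a \<Rightarrow> 'a set) \<Rightarrow> ('a \<Rightarrow> 'a set) \<Rightarrow> 'a set \<Rightarrow> bool" where
  "receptive C mns pls S \<longleftrightarrow>
     (\<forall>x\<in>C.
       (setm pls (mns x) \<inter> setm pls (pls x) \<subseteq> S \<and> S \<inter> setm mns (mns x) = {}
          \<longrightarrow> S \<inter> setm mns (pls x) = {}) \<and>
       (setm mns (pls x) \<inter> setm mns (mns x) \<subseteq> S \<and> S \<inter> setm pls (pls x) = {}
          \<longrightarrow> S \<inter> setm pls (mns x) = {}))"

end

theory Submission
  imports Defs
begin

text \<open>Write \<open>A = x\<^sup>+\<^sup>+\<close>, \<open>B = x\<^sup>+\<^sup>-\<close>, \<open>D = x\<^sup>-\<^sup>+\<close>, \<open>E = x\<^sup>-\<^sup>-\<close>. Axiom 1 says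
  \<open>A \<union> E = D \<union> B\<close>, and Axiom 3B (applied to one-step chains between a positive and a negative
  face of \<open>x\<close>) makes \<open>A \<inter> E\<close> and \<open>B \<inter> D\<close> empty. Since \<open>x\<^sup>+\<close> moves \<open>M\<close> to \<open>P\<close>, \<open>M\<close> contains
  \<open>B \<inter> E\<close> and avoids \<open>A\<close>, so receptivity of \<open>M\<close> yields \<open>M \<inter> D = {}\<close>; the remaining claim
  is then pure set algebra.\<close>

lemma parity_complex_faces_subset:
  assumes "parity_complex C dim mns pls" and "x \<in> C"
  shows "mns x \<subseteq> C \<and> pls x \<subseteq> C"
proof (cases "dim x")
  case 0
  with assms show ?thesis unfolding parity_complex_def by simp
next
  case Suc
  with assms show ?thesis unfolding parity_complex_def by blast
qed

lemma parity_complex_axiom1: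
  assumes "parity_complex C dim mns pls" and "x \<in> C"
  shows "setm pls (pls x) \<union> setm mns (mns x) = setm pls (mns x) \<union> setm mns (pls x)"
  using assms unfolding parity_complex_def by simp

lemma parity_complex_axiom3B:
  assumes "parity_complex C dim mns pls" and "a \<in> C" and "b \<in> C" and "z \<in> C"
    and "(a, b) \<in> (prec_rel C mns pls)\<^sup>*"
  shows "\<not> (a \<in> pls z \<and> b \<in> mns z)" and "\<not> (b \<in> pls z \<and> a \<in> mns z)"
  using assms unfolding parity_complex_def by meson+

lemma parity_complex_opposite_faces_incomparable:
  assumes pc: "parity_complex C dim mns pls" and "z \<in> C"
    and w: "w \<in> pls z" and v: "v \<in> mns z"
  shows "pls w \<inter> mns v = {}" and "pls v \<inter> mns w = {}"
proof -
  have "w \<in> C" "v \<in> C"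
    using parity_complex_faces_subset[OF pc \<open>z \<in> C\<close>] w v by auto
  have "(w, v) \<notin> prec_rel C mns pls"
    using parity_complex_axiom3B(1)[OF pc \<open>w \<in> C\<close> \<open>v \<in> C\<close> \<open>z \<in> C\<close>] w v by blast
  then show "pls w \<inter> mns v = {}"
    using \<open>w \<in> C\<close> \<open>v \<in> C\<close> unfolding prec_rel_def by blast
  have "(v, w) \<notin> prec_rel C mns pls"
    using parity_complex_axiom3B(2)[OF pc \<open>v \<in> C\<close> \<open>w \<in> C\<close> \<open>z \<in> C\<close>] w v by blast
  then show "pls v \<inter> mns w = {}"
    using \<open>w \<in> C\<close> \<open>v \<in> C\<close> unfolding prec_rel_def by blast
qed

lemma parity_complex_pls_pls_disjoint_mns_mns:
  assumes "parity_complex C dim mns pls" and "x \<in> C"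
  shows "setm pls (pls x) \<inter> setm mns (mns x) = {}"
proof -
  have "pls w \<inter> mns v = {}" if "w \<in> pls x" "v \<in> mns x" for w v
    using parity_complex_opposite_faces_incomparable(1)[OF assms that] .
  then show ?thesis unfolding setm_def by blast
qed

lemma parity_complex_mns_pls_disjoint_pls_mns:
  assumes "parity_complex C dim mns pls" and "x \<in> C"
  shows "setm mns (pls x) \<inter> setm pls (mns x) = {}"
proof -
  have "mns w \<inter> pls v = {}" if "w \<in> pls x" "v \<in> mns x" for w v
    using parity_complex_opposite_faces_incomparable(2)[OF assms that] by blast
  then show ?thesis unfolding setm_def by blast
qed

lemma receptive_moved_by_pls_avoids_pls_mns:
  assumes pc: "parity_complex C dim mns pls" and "x \<in> C"
    and mv: "moves mns pls (pls x) M P" and rec: "receptive C mns pls M"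
  shows "M \<inter> setm pls (mns x) = {}"
proof -
  have "setm pls (pls x) \<inter> setm mns (mns x) = {}"
    using pc \<open>x \<in> C\<close> by (rule parity_complex_pls_pls_disjoint_mns_mns)
  with mv have "setm mns (pls x) \<inter> setm mns (mns x) \<subseteq> M" and "M \<inter> setm pls (pls x) = {}"
    unfolding moves_def by blast+
  with rec \<open>x \<in> C\<close> show ?thesis
    unfolding receptive_def by blast
qed

lemma moves_exchange:
  assumes "A \<union> E = D \<union> B" and "A \<inter> E = {}" and "B \<inter> D = {}"
    and "M = (P \<union> B) - A" and "P = (M \<union> A) - B" and "M \<inter> D = {}"
  shows "M = (P \<union> E) - D" and "P = (M \<union> D) - E"
  using assms by auto

theorem lemma3p1:
  fixes C :: "'a set" and dim :: "'a \<Rightarrow> nat" and mns pls :: "'a \<Rightarrow> 'a set"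
    and M P :: "'a set" and x :: 'a
  assumes "parity_complex C dim mns pls"
    and "M \<subseteq> C" and "P \<subseteq> C" and "x \<in> C"
    and "moves mns pls (pls x) M P"
    and "receptive C mns pls M"
  shows "moves mns pls (mns x) M P"
proof -
  note exchange = moves_exchange[OF parity_complex_axiom1[OF assms(1,4)]
      parity_complex_pls_pls_disjoint_mns_mns[OF assms(1,4)]
      parity_complex_mns_pls_disjoint_pls_mns[OF assms(1,4)]
      assms(5)[unfolded moves_def, THEN conjunct1]
      assms(5)[unfolded moves_def, THEN conjunct2]
      receptive_moved_by_pls_avoids_pls_mns[OF assms(1,4,5,6)]]
  show ?thesis
    unfolding moves_def using exchange by blast
qed

end
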